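(* Let $\beta\ge1$. For nonzero $x,y\in\mathbb R^m$ (any $m\ge1$) define $$\cos_{(\beta,\infty)}(x,y)=\Big\langle\Big(\frac{x}{\|x\|_\infty}\Big)^{\ominus\beta},\frac{\mathrm{sign}_\infty(y)}{\|\mathrm{sign}_\infty(y)\|_1}\Big\rangle,$$ where the $i$-th component of $\mathrm{sign}_\infty(y)$ is $\mathrm{sign}(y_i)\,\mathbb I(|y_i|=\|y\|_\infty)$. Let $x=(x_0,x_1)$ and $y=(y_0,y_1)$ with $x_0,y_0\in\mathbb R^{d_0}$ and $x_1,y_1\in\mathbb R^{d_1}$, $d=d_0+d_1$. If $\|x_0\|_\infty>\|x_1\|_\infty$ and $\|y_0\|_\infty>\|y_1\|_\infty$, then $\cos_{(\beta,\infty)}(x_0,y_0)=\cos_{(\beta,\infty)}(x,y)$.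
   Context: $\langle\cdot,\cdot\rangle$ is the Euclidean inner product; $\|v\|_\infty=\max_i|v_i|$, $\|v\|_1=\sum_i|v_i|$. For a vector $v$, $v^{\ominus\beta}$ is taken componentwise with $t^{\ominus\beta}=\mathrm{sign}(t)|t|^\beta$, $\mathrm{sign}(0)=0$; $\mathbb I$ is the indicator function. $\cos_{(\beta,\infty)}$ is the limit as $\gamma\to\infty$ of the $(\beta,\gamma)$-cosine $\langle(x/\|x\|_{\beta+\gamma})^{\ominus\beta},(y/\|y\|_{\beta+\gamma})^{\ominus\gamma}\rangle$. *)

theory Defs
  imports Complex_Main
begin

text \<open>Vectors in R^n are represented as functions nat => real; only the components
  with index i < n matter.\<close>

definition sgnpow :: "real \<Rightarrow> real \<Rightarrow> real" where
  "sgnpow t b = sgn t * \<bar>t\<bar> powr b"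

definition norm_inf :: "nat \<Rightarrow> (nat \<Rightarrow> real) \<Rightarrow> real" where
  "norm_inf n x = Max (insert 0 ((\<lambda>i. \<bar>x i\<bar>) ` {..<n}))"

definition norm1 :: "nat \<Rightarrow> (nat \<Rightarrow> real) \<Rightarrow> real" where
  "norm1 n x = (\<Sum>i<n. \<bar>x i\<bar>)"

definition sign_inf :: "nat \<Rightarrow> (nat \<Rightarrow> real) \<Rightarrow> nat \<Rightarrow> real" where
  "sign_inf n y i = sgn (y i) * (if \<bar>y i\<bar> = norm_inf n y then 1 else 0)"

definition cos_binf :: "nat \<Rightarrow> real \<Rightarrow> (nat \<Rightarrow> real) \<Rightarrow> (nat \<Rightarrow> real) \<Rightarrow> real" where
  "cos_binf n b x y =
     (\<Sum>i<n. sgnpow (x i / norm_inf n x) b * (sign_inf n y i / norm1 n (sign_inf n y)))"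

definition vconcat :: "nat \<Rightarrow> (nat \<Rightarrow> real) \<Rightarrow> (nat \<Rightarrow> real) \<Rightarrow> nat \<Rightarrow> real" where
  "vconcat d0 x0 x1 i = (if i < d0 then x0 i else x1 (i - d0))"

end

theory Submission
  imports Defs
begin

text \<open>Under the hypotheses the sup-norms of \<open>(x\<^sub>0, x\<^sub>1)\<close> and \<open>(y\<^sub>0, y\<^sub>1)\<close> are attained
  only in the first block, so \<open>sign\<^sub>\<infinity>(y\<^sub>0, y\<^sub>1) = (sign\<^sub>\<infinity> y\<^sub>0, 0)\<close>, and both the normalisation of
  \<open>x\<close> and the \<open>\<ominus>\<beta>\<close>-power of its first block are unchanged. Every summand of the
  cosine indexed by the second block therefore vanishes. The argument works for every
  exponent \<open>\<beta>\<close>.\<close>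

lemma norm_inf_nonneg: "0 \<le> norm_inf n x"
  unfolding norm_inf_def by (rule Max_ge) auto

lemma abs_le_norm_inf: "i < n \<Longrightarrow> \<bar>x i\<bar> \<le> norm_inf n x"
  unfolding norm_inf_def by (rule Max_ge) auto

lemma norm_inf_le:
  assumes "0 \<le> c" and "\<And>i. i < n \<Longrightarrow> \<bar>x i\<bar> \<le> c"
  shows "norm_inf n x \<le> c"
  using assms unfolding norm_inf_def by (subst Max_le_iff) auto

lemma norm_inf_vconcat:
  assumes "norm_inf d1 x1 \<le> norm_inf d0 x0"
  shows "norm_inf (d0 + d1) (vconcat d0 x0 x1) = norm_inf d0 x0"
proof (rule antisym)
  show "norm_inf (d0 + d1) (vconcat d0 x0 x1) \<le> norm_inf d0 x0"
  proof (rule norm_inf_le[OF norm_inf_nonneg])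
    fix i assume i: "i < d0 + d1"
    show "\<bar>vconcat d0 x0 x1 i\<bar> \<le> norm_inf d0 x0"
    proof (cases "i < d0")
      case True
      then show ?thesis by (simp add: vconcat_def abs_le_norm_inf)
    next
      case False
      with i have "\<bar>x1 (i - d0)\<bar> \<le> norm_inf d1 x1" by (intro abs_le_norm_inf) auto
      with False assms show ?thesis by (simp add: vconcat_def)
    qed
  qed
next
  show "norm_inf d0 x0 \<le> norm_inf (d0 + d1) (vconcat d0 x0 x1)"
  proof (rule norm_inf_le[OF norm_inf_nonneg])
    fix i assume "i < d0"
    then show "\<bar>x0 i\<bar> \<le> norm_inf (d0 + d1) (vconcat d0 x0 x1)"
      using abs_le_norm_inf[of i "d0 + d1" "vconcat d0 x0 x1"] by (simp add: vconcat_def)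
  qed
qed

lemma sign_inf_vconcat_first:
  assumes "norm_inf d1 y1 \<le> norm_inf d0 y0" and "i < d0"
  shows "sign_inf (d0 + d1) (vconcat d0 y0 y1) i = sign_inf d0 y0 i"
  using assms norm_inf_vconcat[OF assms(1)] by (simp add: sign_inf_def vconcat_def)

lemma sign_inf_vconcat_second:
  assumes "norm_inf d1 y1 < norm_inf d0 y0" and "d0 \<le> i" and "i < d0 + d1"
  shows "sign_inf (d0 + d1) (vconcat d0 y0 y1) i = 0"
proof -
  have "\<bar>y1 (i - d0)\<bar> \<le> norm_inf d1 y1"
    using assms(2,3) by (intro abs_le_norm_inf) auto
  then show ?thesis
    using assms norm_inf_vconcat[of d1 y1 d0 y0] by (simp add: sign_inf_def vconcat_def)
qed

lemma sum_lessThan_add_eq_if_vanishing: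
  fixes g :: "nat \<Rightarrow> 'a::comm_monoid_add"
  assumes "\<And>i. d0 \<le> i \<Longrightarrow> i < d0 + d1 \<Longrightarrow> g i = 0"
  shows "(\<Sum>i<d0 + d1. g i) = (\<Sum>i<d0. g i)"
  using assms by (intro sum.mono_neutral_right) auto

lemma norm1_sign_inf_vconcat:
  assumes "norm_inf d1 y1 < norm_inf d0 y0"
  shows "norm1 (d0 + d1) (sign_inf (d0 + d1) (vconcat d0 y0 y1)) = norm1 d0 (sign_inf d0 y0)"
  unfolding norm1_def
  using assms sign_inf_vconcat_first sign_inf_vconcat_second
  by (simp add: sum_lessThan_add_eq_if_vanishing)

theorem mainTheorem13:
  fixes b :: real and d0 d1 :: nat and x0 x1 y0 y1 :: "nat \<Rightarrow> real"
  assumes "b \<ge> 1"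
    and "norm_inf d0 x0 > norm_inf d1 x1"
    and "norm_inf d0 y0 > norm_inf d1 y1"
  shows "cos_binf d0 b x0 y0 = cos_binf (d0 + d1) b (vconcat d0 x0 x1) (vconcat d0 y0 y1)"
proof -
  let ?x = "vconcat d0 x0 x1" and ?s = "sign_inf (d0 + d1) (vconcat d0 y0 y1)"
  let ?term = "\<lambda>i. sgnpow (?x i / norm_inf d0 x0) b * (?s i / norm1 d0 (sign_inf d0 y0))"
  have "cos_binf (d0 + d1) b ?x (vconcat d0 y0 y1) = (\<Sum>i<d0 + d1. ?term i)"
    unfolding cos_binf_def norm_inf_vconcat[OF less_imp_le[OF assms(2)]]
      norm1_sign_inf_vconcat[OF assms(3)] ..
  also have "\<dots> = (\<Sum>i<d0. ?term i)"
    using assms(3) sign_inf_vconcat_second by (intro sum_lessThan_add_eq_if_vanishing) simp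
  also have "\<dots> = cos_binf d0 b x0 y0"
    unfolding cos_binf_def
    using assms(3) sign_inf_vconcat_first by (intro sum.cong) (simp_all add: vconcat_def)
  finally show ?thesis by simp
qed

end
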